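(* Let $n>3$ and let $a<b<c$ be elements of $\mathcal{C}_n$. Then the triangle $\triangle^{(n)}\{a,b,c\}$ has at least one right identity and has no left identity.
   Context: $\mathcal{C}_n=\{0,1,\dots,n-1\}$ with its usual order; $\widehat{\mathcal{E}}_{\mathcal{C}_n}$ is the set of all order-preserving maps $\mathcal{C}_n\to\mathcal{C}_n$ (not required to fix $0$), a semiring with $(\alpha+\beta)(x)=\max(\alpha(x),\beta(x))$ and $(\alpha\cdot\beta)(x)=\beta(\alpha(x))$. The triangle $\triangle^{(n)}\{a,b,c\}$ is the subsemiring of all $\alpha\in\widehat{\mathcal{E}}_{\mathcal{C}_n}$ with image contained in $\{a,b,c\}$. A right (resp. left) identity of a semiring $R$ is $e\in R$ with $xe=x$ (resp. $ex=x$) for all $x\in R$. *)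

theory Defs
  imports Main
begin

text \<open>The chain C_n = {0,...,n-1}. Maps C_n -> C_n are represented as functions
  nat => nat that are extensional (value 0 outside {0..<n}).\<close>

definition chain :: "nat \<Rightarrow> nat set" where
  "chain n = {0..<n}"

text \<open>All order-preserving maps C_n -> C_n (not required to fix 0).\<close>
definition endo_hat :: "nat \<Rightarrow> (nat \<Rightarrow> nat) set" where
  "endo_hat n = {\<alpha>. (\<forall>x \<in> chain n. \<alpha> x \<in> chain n)
                    \<and> (\<forall>x \<in> chain n. \<forall>y \<in> chain n. x \<le> y \<longrightarrow> \<alpha> x \<le> \<alpha> y)
                    \<and> (\<forall>x. x \<notin> chain n \<longrightarrow> \<alpha> x = 0)}"

definition endo_add :: "nat \<Rightarrow> (nat \<Rightarrow> nat) \<Rightarrow> (nat \<Rightarrow> nat) \<Rightarrow> (nat \<Rightarrow> nat)" where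
  "endo_add n \<alpha> \<beta> = (\<lambda>x. if x \<in> chain n then max (\<alpha> x) (\<beta> x) else 0)"

definition endo_mult :: "nat \<Rightarrow> (nat \<Rightarrow> nat) \<Rightarrow> (nat \<Rightarrow> nat) \<Rightarrow> (nat \<Rightarrow> nat)" where
  "endo_mult n \<alpha> \<beta> = (\<lambda>x. if x \<in> chain n then \<beta> (\<alpha> x) else 0)"

definition triangle :: "nat \<Rightarrow> nat \<Rightarrow> nat \<Rightarrow> nat \<Rightarrow> (nat \<Rightarrow> nat) set" where
  "triangle n a b c = {\<alpha> \<in> endo_hat n. \<alpha> ` chain n \<subseteq> {a, b, c}}"

definition is_right_identity :: "nat \<Rightarrow> (nat \<Rightarrow> nat) set \<Rightarrow> (nat \<Rightarrow> nat) \<Rightarrow> bool" where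
  "is_right_identity n R e \<longleftrightarrow> e \<in> R \<and> (\<forall>x \<in> R. endo_mult n x e = x)"

definition is_left_identity :: "nat \<Rightarrow> (nat \<Rightarrow> nat) set \<Rightarrow> (nat \<Rightarrow> nat) \<Rightarrow> bool" where
  "is_left_identity n R e \<longleftrightarrow> e \<in> R \<and> (\<forall>x \<in> R. endo_mult n e x = x)"

end

theory Submission
  imports Defs
begin

text \<open>Every \<alpha> in the triangle takes values in {a,b,c}, and \<alpha> \<cdot> e is e \<circ> \<alpha>; so any member
  of the triangle fixing a, b and c is a right identity, e.g. the retraction rounding y
  up to the next of a, b, c. A left identity e would need x \<circ> e = x for every x in the
  triangle. Since e has at most three values while n > 3, it moves some point d, and a
  step map jumping from a to b between d and e d then tells d and e d apart.\<close>

definition threshold_map :: "nat \<Rightarrow> nat \<Rightarrow> nat \<Rightarrow> nat \<Rightarrow> nat \<Rightarrow> nat" where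
  "threshold_map n t u v = (\<lambda>y. if y < n then if y < t then u else v else 0)"

definition triangle_retraction :: "nat \<Rightarrow> nat \<Rightarrow> nat \<Rightarrow> nat \<Rightarrow> nat \<Rightarrow> nat" where
  "triangle_retraction n a b c =
     (\<lambda>y. if y < n then if y \<le> a then a else if y \<le> b then b else c else 0)"

lemma threshold_map_in_triangle:
  assumes "u \<in> {a, b, c}" and "v \<in> {a, b, c}" and "u \<le> v" and "v < n"
  shows "threshold_map n t u v \<in> triangle n a b c"
  using assms by (auto simp: triangle_def endo_hat_def chain_def threshold_map_def)

lemma triangle_retraction_in_triangle:
  assumes "a \<le> b" and "b \<le> c" and "c < n"
  shows "triangle_retraction n a b c \<in> triangle n a b c"
  using assms by (auto simp: triangle_def endo_hat_def chain_def triangle_retraction_def)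

lemma triangle_retraction_fixes:
  assumes "a < b" and "b < c" and "c < n"
  shows "triangle_retraction n a b c a = a" "triangle_retraction n a b c b = b"
    "triangle_retraction n a b c c = c"
  using assms by (auto simp: triangle_retraction_def)

lemma is_right_identity_triangle_if_fixes:
  assumes "e \<in> triangle n a b c" and "e a = a" and "e b = b" and "e c = c"
  shows "is_right_identity n (triangle n a b c) e"
  unfolding is_right_identity_def
proof (intro conjI ballI assms(1) ext)
  fix x y assume x: "x \<in> triangle n a b c"
  show "endo_mult n x e y = x y"
  proof (cases "y \<in> chain n")
    case True
    then have "x y \<in> {a, b, c}" using x by (auto simp: triangle_def)
    then show ?thesis using True assms(2-4) by (auto simp: endo_mult_def)
  next
    case False
    then show ?thesis using x by (simp add: endo_mult_def triangle_def endo_hat_def)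
  qed
qed

lemma exists_moved_point_if_small_image:
  assumes "e ` chain n \<subseteq> S" and "finite S" and "card S < n"
  shows "\<exists>d \<in> chain n. e d \<noteq> d"
proof (rule ccontr)
  assume "\<not> ?thesis"
  then have "chain n = e ` chain n" by auto
  then have "chain n \<subseteq> S" using assms(1) by simp
  then have "card (chain n) \<le> card S" using assms(2) by (rule card_mono[rotated])
  with assms(3) show False by (simp add: chain_def)
qed

lemma not_is_left_identity_triangle_if_moves:
  assumes "a < b" and "b < n" and "d \<in> chain n" and "e d \<noteq> d"
  shows "\<not> is_left_identity n (triangle n a b c) e"
proof
  assume left: "is_left_identity n (triangle n a b c) e"
  then have "e d \<in> chain n"
    using assms(3) by (auto simp: is_left_identity_def triangle_def endo_hat_def)
  define x where "x = threshold_map n (max d (e d)) a b"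
  have "x \<in> triangle n a b c"
    unfolding x_def using assms(1,2) by (intro threshold_map_in_triangle) auto
  then have "endo_mult n e x d = x d"
    using left by (simp add: is_left_identity_def)
  then have "x (e d) = x d"
    using assms(3) by (simp add: endo_mult_def)
  moreover have "x (e d) \<noteq> x d"
    using \<open>e d \<in> chain n\<close> assms(1,3,4)
    by (cases "d < e d") (simp_all add: x_def threshold_map_def chain_def max_def)
  ultimately show False by simp
qed

theorem proposition24:
  fixes n a b c :: nat
  assumes "n > 3" and "a \<in> chain n" and "b \<in> chain n" and "c \<in> chain n"
    and "a < b" and "b < c"
  shows "(\<exists>e. is_right_identity n (triangle n a b c) e)
       \<and> \<not> (\<exists>e. is_left_identity n (triangle n a b c) e)"
proof
  have "c < n" using assms(4) by (simp add: chain_def)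
  then have "b < n" using assms(6) by simp
  let ?r = "triangle_retraction n a b c"
  have "?r \<in> triangle n a b c"
    using assms(5,6) \<open>c < n\<close> by (simp add: triangle_retraction_in_triangle)
  then have "is_right_identity n (triangle n a b c) ?r"
    using triangle_retraction_fixes[OF assms(5,6) \<open>c < n\<close>]
    by (simp add: is_right_identity_triangle_if_fixes)
  then show "\<exists>e. is_right_identity n (triangle n a b c) e" by blast
  show "\<not> (\<exists>e. is_left_identity n (triangle n a b c) e)"
  proof
    assume "\<exists>e. is_left_identity n (triangle n a b c) e"
    then obtain e where left: "is_left_identity n (triangle n a b c) e" ..
    have "card {a, b, c} \<le> 3"
      by (simp add: card_insert_if)
    then have "card {a, b, c} < n" using assms(1) by simp
    moreover have "e ` chain n \<subseteq> {a, b, c}"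
      using left by (simp add: is_left_identity_def triangle_def)
    ultimately obtain d where "d \<in> chain n" "e d \<noteq> d"
      using exists_moved_point_if_small_image[of e n "{a, b, c}"] by auto
    with left show False
      using not_is_left_identity_triangle_if_moves[OF assms(5) \<open>b < n\<close>] by simp
  qed
qed

end
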